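(* Let $E,A\in\mathbb{R}^{n\times n}$ with $A$ nonsingular and let $\mathcal{C}=\mathcal{C}(E,A)$ be the consistency space of $(E,A)$. A symmetric matrix $P\in\mathbb{R}^{n\times n}$ is a Lyapunov matrix for $(E,A)$ if and only if $x^TPx>0$ for all nonzero $x\in\mathcal{C}$ and $x^T\big(PA^{-1}E+E^TA^{-T}P\big)x<0$ for all nonzero $x\in\mathcal{C}$.
   Context: For $E,A\in\mathbb{R}^{n\times n}$ with $A$ nonsingular, $(E,A)$ denotes the linear descriptor system $E\dot x=Ax$. Its index is the smallest integer $k^*\ge 0$ with $\mathrm{Im}((A^{-1}E)^{k^*+1})=\mathrm{Im}((A^{-1}E)^{k^*})$, and its consistency space is $\mathcal{C}(E,A)=\mathrm{Im}((A^{-1}E)^{k^*})$ (the set of initial states from which the system has a continuous solution). If $\mathcal{C}\neq\{0\}$, the map $A^{-1}E$ maps $\mathcal{C}$ bijectively onto itself; letting $\tilde A$ be the inverse of its restriction to $\mathcal{C}$, the system restricted to $\mathcal{C}$ is equivalent to $\dot x=\tilde Ax$, $x\in\mathcal{C}$. A symmetric matrix $P$ is a Lyapunov matrix for $(E,A)$ if the function $V(x)=x^TPx$ is positive on $\mathcal{C}\setminus\{0\}$ and its derivative along solutions, $\dot V=2x^TP\dot x$ with $\dot x=\tilde A x$, is negative at every nonzero state $x\in\mathcal{C}$. *)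

theory Defs
  imports "HOL-Analysis.Analysis"
begin

text \<open>Descriptor system E x' = A x with A nonsingular. M = A^{-1} E.\<close>

definition dae_M :: "real^'n^'n \<Rightarrow> real^'n^'n \<Rightarrow> real^'n^'n" where
  "dae_M E A = matrix_inv A ** E"

definition dae_index :: "real^'n^'n \<Rightarrow> real^'n^'n \<Rightarrow> nat" where
  "dae_index E A = (LEAST k. range (((*v) (dae_M E A)) ^^ (Suc k)) = range (((*v) (dae_M E A)) ^^ k))"

definition consistency_space :: "real^'n^'n \<Rightarrow> real^'n^'n \<Rightarrow> (real^'n) set" where
  "consistency_space E A = range (((*v) (dae_M E A)) ^^ (dae_index E A))"

definition dae_Atilde :: "real^'n^'n \<Rightarrow> real^'n^'n \<Rightarrow> real^'n \<Rightarrow> real^'n" where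
  "dae_Atilde E A x = (THE y. y \<in> consistency_space E A \<and> dae_M E A *v y = x)"

definition lyapunov_matrix :: "real^'n^'n \<Rightarrow> real^'n^'n \<Rightarrow> real^'n^'n \<Rightarrow> bool" where
  "lyapunov_matrix E A P \<longleftrightarrow> transpose P = P \<and>
     (\<forall>x \<in> consistency_space E A. x \<noteq> 0 \<longrightarrow> x \<bullet> (P *v x) > 0) \<and>
     (\<forall>x \<in> consistency_space E A. x \<noteq> 0 \<longrightarrow> 2 * (x \<bullet> (P *v dae_Atilde E A x)) < 0)"

end

theory Submission
  imports Defs
begin

text \<open>On the consistency space \<open>C\<close> the map \<open>M = A\<^sup>-\<^sup>1E\<close> is a linear bijection (\<open>C\<close> is the
  stable range of the powers of \<open>M\<close>, and a linear surjection of a finite-dimensional space onto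
  itself is injective), and \<open>\<tilde>A\<close> is its inverse there. Hence the Lyapunov derivative
  \<open>2 x\<^sup>T P \<tilde>A x\<close> on \<open>C - {0}\<close> is, after substituting \<open>x = M y\<close> and using the symmetry of \<open>P\<close>,
  the quadratic form \<open>2 y\<^sup>T P M y = y\<^sup>T (P M + M\<^sup>T P) y\<close> on \<open>C - {0}\<close>.\<close>

lemma inner_symmetric_matrix_vector:
  fixes P :: "real^'n^'n"
  assumes "transpose P = P"
  shows "u \<bullet> (P *v v) = v \<bullet> (P *v u)"
proof -
  have "u \<bullet> (P *v v) = (u v* P) \<bullet> v" by (simp add: dot_lmul_matrix)
  also have "\<dots> = (transpose P *v u) \<bullet> v" by (simp add: vector_transpose_matrix)
  also have "\<dots> = v \<bullet> (P *v u)" using assms by (simp add: inner_commute)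
  finally show ?thesis .
qed

lemma inner_lyapunov_operator:
  fixes M P :: "real^'n^'n"
  assumes "transpose P = P"
  shows "x \<bullet> ((P ** M + transpose M ** P) *v x) = 2 * (x \<bullet> (P *v (M *v x)))"
proof -
  have "x \<bullet> ((transpose M ** P) *v x) = x \<bullet> (transpose M *v (P *v x))"
    by (simp add: matrix_vector_mul_assoc)
  also have "\<dots> = (x v* transpose M) \<bullet> (P *v x)"
    by (rule dot_lmul_matrix[symmetric])
  also have "\<dots> = x \<bullet> (P *v (M *v x))"
    using inner_symmetric_matrix_vector[OF assms, of x "M *v x"]
    by (simp add: vector_transpose_matrix inner_commute)
  finally show ?thesis
    by (simp add: matrix_vector_mult_add_rdistrib inner_add_right matrix_vector_mul_assoc)
qed

lemma linear_funpow:
  fixes f :: "'a::real_vector \<Rightarrow> 'a"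
  assumes "linear f"
  shows "linear (f ^^ k)"
proof (induction k)
  case 0
  show ?case by (simp add: linear_iff)
next
  case (Suc k)
  show ?case using linear_compose[OF Suc assms] by (simp add: comp_def)
qed

lemma range_funpow_stabilizes:
  fixes f :: "'a::euclidean_space \<Rightarrow> 'a"
  assumes "linear f"
  shows "\<exists>k. range (f ^^ Suc k) = range (f ^^ k)"
proof (rule ccontr)
  assume no_fixpoint: "\<not> ?thesis"
  have "range (f ^^ Suc k) \<subset> range (f ^^ k)" for k
    using no_fixpoint by (auto simp: funpow_swap1)
  moreover have "subspace (range (f ^^ k))" for k
    using linear_subspace_image[OF linear_funpow[OF assms] subspace_UNIV] .
  ultimately have dim_decreases: "dim (range (f ^^ Suc k)) < dim (range (f ^^ k))" for k
    by (metis dim_psubset span_eq_iff)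
  have "dim (range (f ^^ k)) + k \<le> dim (range (f ^^ 0))" for k
  proof (induction k)
    case (Suc k)
    from Suc.IH dim_decreases[of k] show ?case by linarith
  qed simp
  moreover have "dim (range (f ^^ 0)) < Suc DIM('a)"
    by (simp add: dim_UNIV)
  ultimately show False
    by (metis add_leE not_less_eq_eq)
qed

text \<open>A linear map of a subspace onto itself is injective there: the images of a basis still span,
  so they are as many as the basis elements and independent.\<close>

lemma linear_inj_on_subspace_if_image_eq:
  fixes f :: "'a::euclidean_space \<Rightarrow> 'a"
  assumes f: "linear f" and S: "subspace S" and img: "f ` S = S"
  shows "inj_on f S"
proof -
  obtain B where B: "B \<subseteq> S" "independent B" "S \<subseteq> span B" "card B = dim S"
    using basis_exists by blast
  have "finite B" using B(2) independent_bound_general by blast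
  have "span B = S" using B S by (meson span_minimal subset_antisym)
  then have span_fB: "span (f ` B) = S"
    using img span_linear_image[OF f] by simp
  then have "dim S \<le> card (f ` B)"
    by (metis \<open>finite B\<close> dim_span finite_imageI span_card_ge_dim span_superset order_refl)
  then have card_fB: "card (f ` B) = card B"
    using card_image_le[OF \<open>finite B\<close>, of f] B(4) by simp
  have "independent (f ` B)"
    using card_eq_dim[of "f ` B" S] B img span_fB card_fB \<open>finite B\<close> by auto
  moreover have "inj_on f B"
    using eq_card_imp_inj_on[OF \<open>finite B\<close> card_fB] .
  ultimately show ?thesis
    using linear_inj_on_span_iff_independent_image[OF f] \<open>span B = S\<close> by auto
qed

lemma subspace_consistency_space: "subspace (consistency_space E A)"
  unfolding consistency_space_def
  by (rule linear_subspace_image[OF linear_funpow subspace_UNIV]) simp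

lemma image_consistency_space:
  "(*v) (dae_M E A) ` consistency_space E A = consistency_space E A"
proof -
  let ?f = "(*v) (dae_M E A)"
  have "range (?f ^^ Suc (dae_index E A)) = range (?f ^^ dae_index E A)"
    unfolding dae_index_def
    by (rule LeastI_ex[OF range_funpow_stabilizes]) simp
  then show ?thesis
    by (simp add: consistency_space_def image_comp)
qed

lemma bij_betw_consistency_space:
  "bij_betw ((*v) (dae_M E A)) (consistency_space E A) (consistency_space E A)"
  using linear_inj_on_subspace_if_image_eq[OF _ subspace_consistency_space image_consistency_space]
    image_consistency_space[of E A]
  by (simp add: bij_betw_def)

lemma dae_Atilde_eq_the_inv_into:
  "dae_Atilde E A = the_inv_into (consistency_space E A) ((*v) (dae_M E A))"
  by (simp add: fun_eq_iff dae_Atilde_def the_inv_into_def)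

lemma ball_nonzero_the_inv_into_iff:
  fixes f :: "'a::zero \<Rightarrow> 'a"
  assumes f: "bij_betw f S S" and "0 \<in> S" and "f 0 = 0"
  shows "(\<forall>x\<in>S. x \<noteq> 0 \<longrightarrow> R x (the_inv_into S f x)) \<longleftrightarrow> (\<forall>y\<in>S. y \<noteq> 0 \<longrightarrow> R (f y) y)"
proof -
  have inj: "inj_on f S" and img: "f ` S = S"
    using f by (auto simp: bij_betw_def)
  have nonzero: "f y \<noteq> 0 \<longleftrightarrow> y \<noteq> 0" if "y \<in> S" for y
    using inj_onD[OF inj] assms that by metis
  show ?thesis
  proof
    assume R: "\<forall>x\<in>S. x \<noteq> 0 \<longrightarrow> R x (the_inv_into S f x)"
    show "\<forall>y\<in>S. y \<noteq> 0 \<longrightarrow> R (f y) y"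
    proof (intro ballI impI)
      fix y assume "y \<in> S" "y \<noteq> 0"
      then have "R (f y) (the_inv_into S f (f y))"
        using R img nonzero by blast
      then show "R (f y) y"
        using the_inv_into_f_f[OF inj \<open>y \<in> S\<close>] by simp
    qed
  next
    assume R: "\<forall>y\<in>S. y \<noteq> 0 \<longrightarrow> R (f y) y"
    show "\<forall>x\<in>S. x \<noteq> 0 \<longrightarrow> R x (the_inv_into S f x)"
    proof (intro ballI impI)
      fix x assume "x \<in> S" "x \<noteq> 0"
      then have "the_inv_into S f x \<in> S" and "f (the_inv_into S f x) = x"
        using img inj by (auto intro: the_inv_into_into f_the_inv_into_f)
      then show "R x (the_inv_into S f x)"
        using R nonzero \<open>x \<noteq> 0\<close> by metis
    qed
  qed
qed

theorem lemma1:
  fixes E A P :: "real^'n^'n"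
  assumes "invertible A"
    and "transpose P = P"
  shows "lyapunov_matrix E A P \<longleftrightarrow>
    (\<forall>x \<in> consistency_space E A. x \<noteq> 0 \<longrightarrow> x \<bullet> (P *v x) > 0) \<and>
    (\<forall>x \<in> consistency_space E A. x \<noteq> 0 \<longrightarrow>
       x \<bullet> ((P ** matrix_inv A ** E + transpose E ** transpose (matrix_inv A) ** P) *v x) < 0)"
proof -
  let ?C = "consistency_space E A" and ?M = "dae_M E A"
  have "P ** matrix_inv A ** E + transpose E ** transpose (matrix_inv A) ** P
      = P ** ?M + transpose ?M ** P"
    by (simp add: dae_M_def matrix_mul_assoc matrix_transpose_mul)
  then have form: "x \<bullet> ((P ** matrix_inv A ** E + transpose E ** transpose (matrix_inv A) ** P) *v x)
      = 2 * ((?M *v x) \<bullet> (P *v x))" for x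
    using inner_lyapunov_operator[OF assms(2)] inner_symmetric_matrix_vector[OF assms(2)] by simp
  have "(\<forall>x\<in>?C. x \<noteq> 0 \<longrightarrow> 2 * (x \<bullet> (P *v dae_Atilde E A x)) < 0)
      \<longleftrightarrow> (\<forall>y\<in>?C. y \<noteq> 0 \<longrightarrow> 2 * ((?M *v y) \<bullet> (P *v y)) < 0)"
    unfolding dae_Atilde_eq_the_inv_into
    by (rule ball_nonzero_the_inv_into_iff[OF bij_betw_consistency_space])
      (simp_all add: subspace_0[OF subspace_consistency_space])
  then show ?thesis
    using assms(2) by (simp add: lyapunov_matrix_def form)
qed

end
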